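(* Let $d\ge 2$ and $k$ be positive integers. There exists a unique subset $\mathcal{X}$ of $\mathbb{P}^d_\circ$ such that $|\mathcal{X}|=\delta_z(d,k)$ and $\kappa(\mathcal{X})\le k$ if and only if $k=\kappa(B(d,p)\cap\mathbb{P}^d_\circ)$ for some positive integer $p$.
   Context: A point of $\mathbb{Z}^d$ is primitive if its coordinates are relatively prime; $\mathbb{P}^d_\circ$ denotes the set of primitive points of $\mathbb{Z}^d$ whose first non-zero coordinate is positive. $B(d,p)=\{x\in\mathbb{R}^d:\|x\|_1\le p\}$. For a finite $\mathcal{X}\subset\mathbb{R}^d$, $\kappa(\mathcal{X})=\max_{1\le i\le d}\sum_{x\in\mathcal{X}}|x_i|$, and $\delta_z(d,k)=\max\{|\mathcal{X}|:\mathcal{X}\subset\mathbb{P}^d_\circ,\ \kappa(\mathcal{X})\le k\}$. *)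

theory Defs
  imports Main
begin

text \<open>Points of Z^d are represented as integer lists of length d.\<close>

definition primitive :: "int list \<Rightarrow> bool" where
  "primitive x \<longleftrightarrow> Gcd (set x) = 1"

definition first_nonzero_pos :: "int list \<Rightarrow> bool" where
  "first_nonzero_pos x \<longleftrightarrow> (\<exists>i<length x. (\<forall>j<i. x ! j = 0) \<and> x ! i > 0)"

definition Pcirc :: "nat \<Rightarrow> int list set" where
  "Pcirc d = {x. length x = d \<and> primitive x \<and> first_nonzero_pos x}"

definition Bint :: "nat \<Rightarrow> int \<Rightarrow> int list set" where
  "Bint d p = {x. length x = d \<and> (\<Sum>i<d. \<bar>x ! i\<bar>) \<le> p}"

definition kappa :: "nat \<Rightarrow> int list set \<Rightarrow> int" where
  "kappa d X = Max ((\<lambda>i. \<Sum>x\<in>X. \<bar>x ! i\<bar>) ` {..<d})"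

definition delta_z :: "nat \<Rightarrow> int \<Rightarrow> nat" where
  "delta_z d k = Max {card X | X. finite X \<and> X \<subseteq> Pcirc d \<and> kappa d X \<le> k}"

end

theory Submission
  imports Defs "HOL-Combinatorics.Permutations"
begin

text \<open>
  Summing coordinates in two ways gives \<open>\<Sum>x\<in>X. norm1 d x \<le> d * kappa d X\<close>, with
  equality for \<open>W\<^sub>p = Bint d p \<inter> Pcirc d\<close>, whose column sums all agree because \<open>W\<^sub>p\<close> is
  invariant under transposing two coordinates. The points of \<open>W\<^sub>p\<close> have norm at most \<open>p\<close>
  and all other primitive points have norm greater than \<open>p\<close>, so \<open>W\<^sub>p\<close> is the only set of
  at least its size with \<open>kappa \<le> kappa d W\<^sub>p\<close>: it is the unique extremal set for
  \<open>k = kappa d W\<^sub>p\<close>.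

  Conversely, let \<open>X\<close> be the unique extremal set. No exchange of some \<open>A \<subseteq> X\<close> for a set
  \<open>B\<close> outside \<open>X\<close> with \<open>card A \<le> card B\<close> can keep all column sums \<open>\<le> k\<close>. Exchanging
  single points, and pairs of points whose column sums depend on the coordinates \<open>i\<close>
  and \<open>j\<close> only through \<open>x\<^sub>i + x\<^sub>j\<close>, shows that \<open>X\<close> contains every primitive point whose
  norm is at most that of a point of \<open>X\<close>. Hence \<open>X = W\<^sub>m\<close> for the largest norm \<open>m\<close> in \<open>X\<close>,
  and \<open>kappa d X = k\<close>, since otherwise \<open>(1, m - 1, 0, \<dots>, 0)\<close> could be exchanged for
  \<open>(1, m, 0, \<dots>, 0)\<close>.
\<close>

section \<open>The l1-norm and column sums\<close>

definition norm1 :: "nat \<Rightarrow> int list \<Rightarrow> int" where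
  "norm1 d x = (\<Sum>i<d. \<bar>x ! i\<bar>)"

definition col_sum :: "int list set \<Rightarrow> nat \<Rightarrow> int" where
  "col_sum X i = (\<Sum>x\<in>X. \<bar>x ! i\<bar>)"

definition extremal :: "nat \<Rightarrow> int \<Rightarrow> int list set \<Rightarrow> bool" where
  "extremal d k X \<longleftrightarrow> finite X \<and> X \<subseteq> Pcirc d \<and> card X = delta_z d k \<and> kappa d X \<le> k"

definition nonneg :: "int list \<Rightarrow> bool" where
  "nonneg x \<longleftrightarrow> (\<forall>a\<in>set x. 0 \<le> a)"

lemma Bint_iff: "x \<in> Bint d p \<longleftrightarrow> length x = d \<and> norm1 d x \<le> p"
  by (simp add: Bint_def norm1_def)

lemma abs_nth_le_norm1: "i < d \<Longrightarrow> \<bar>x ! i\<bar> \<le> norm1 d x"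
  unfolding norm1_def by (intro member_le_sum) auto

lemma finite_Bint: "finite (Bint d p)"
proof (rule finite_subset)
  show "Bint d p \<subseteq> {xs. set xs \<subseteq> {-p..p} \<and> length xs = d}"
  proof (clarify, intro conjI subsetI)
    fix x a assume x: "x \<in> Bint d p" and "a \<in> set x"
    then obtain i where "i < d" "a = x ! i" by (auto simp: Bint_iff in_set_conv_nth)
    then show "a \<in> {-p..p}" using x abs_nth_le_norm1[of i d x] by (auto simp: Bint_iff)
  qed (simp add: Bint_iff)
  show "finite {xs. set xs \<subseteq> {-p..p} \<and> length xs = d}"
    by (rule finite_lists_length_eq) simp
qed

lemma norm1_map_abs: "length x = d \<Longrightarrow> norm1 d (map abs x) = norm1 d x"
  by (simp add: norm1_def)

lemma norm1_list_update:
  "length x = d \<Longrightarrow> i < d \<Longrightarrow> norm1 d (x[i := a]) = norm1 d x - \<bar>x ! i\<bar> + \<bar>a\<bar>"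
proof -
  assume "length x = d" "i < d"
  then have "(\<Sum>l\<in>{..<d} - {i}. \<bar>x[i := a] ! l\<bar>) = (\<Sum>l\<in>{..<d} - {i}. \<bar>x ! l\<bar>)"
    by (intro sum.cong) auto
  with \<open>i < d\<close> \<open>length x = d\<close> show ?thesis
    unfolding norm1_def by (simp add: sum.remove[of "{..<d}" i])
qed

lemma norm1_eq_sum_list: "length x = d \<Longrightarrow> norm1 d x = sum_list (map abs x)"
  by (simp add: norm1_def sum_list_sum_nth atLeast0LessThan)

lemma sum_norm1_eq_sum_col_sum: "(\<Sum>x\<in>X. norm1 d x) = (\<Sum>i<d. col_sum X i)"
  unfolding norm1_def col_sum_def by (rule sum.swap)

lemma col_sum_le_kappa: "i < d \<Longrightarrow> col_sum X i \<le> kappa d X"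
  unfolding kappa_def col_sum_def by (intro Max_ge) auto

lemma kappa_le_iff: "d > 0 \<Longrightarrow> kappa d X \<le> k \<longleftrightarrow> (\<forall>i<d. col_sum X i \<le> k)"
  unfolding kappa_def col_sum_def by (subst Max_le_iff) auto

lemma sum_norm1_le: "kappa d X \<le> k \<Longrightarrow> (\<Sum>x\<in>X. norm1 d x) \<le> int d * k"
proof -
  assume "kappa d X \<le> k"
  then have "(\<Sum>i<d. col_sum X i) \<le> (\<Sum>i<d. k)"
    by (intro sum_mono) (meson col_sum_le_kappa lessThan_iff order_trans)
  then show ?thesis by (simp add: sum_norm1_eq_sum_col_sum)
qed

lemma col_sum_exchange:
  assumes "finite X" "A \<subseteq> X" "finite B" "B \<inter> X = {}"
  shows "col_sum (X - A \<union> B) l = col_sum X l - col_sum A l + col_sum B l"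
  unfolding col_sum_def using assms
  by (subst sum.union_disjoint) (auto simp: sum_diff finite_subset)

lemma primitive_iff_map_abs: "primitive x \<longleftrightarrow> primitive (map abs x)"
  unfolding primitive_def using Gcd_image_normalize[of "set x"] by simp

lemma primitive_if_one_mem: "1 \<in> set x \<Longrightarrow> primitive x"
  unfolding primitive_def
  by (metis Gcd_dvd Gcd_int_greater_eq_0 zdvd_antisym_nonneg one_dvd zero_le_one)

lemma first_nonzero_pos_or_uminus:
  assumes "\<exists>i<length x. x ! i \<noteq> 0"
  shows "first_nonzero_pos x \<or> first_nonzero_pos (map uminus x)"
proof -
  obtain i where i: "i < length x" "x ! i \<noteq> 0" and least: "\<forall>j<i. x ! j = 0"
    using assms exists_least_iff[of "\<lambda>i. i < length x \<and> x ! i \<noteq> 0"] by force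
  then show ?thesis
    unfolding first_nonzero_pos_def by (cases "x ! i > 0") (auto intro!: exI[of _ i])
qed

lemma not_first_nonzero_pos_uminus:
  assumes "first_nonzero_pos x" shows "\<not> first_nonzero_pos (map uminus x)"
proof
  assume "first_nonzero_pos (map uminus x)"
  then obtain j where j: "j < length x" "\<forall>l<j. x ! l = 0" "x ! j < 0"
    unfolding first_nonzero_pos_def by auto
  obtain i where i: "i < length x" "\<forall>l<i. x ! l = 0" "x ! i > 0"
    using assms unfolding first_nonzero_pos_def by auto
  show False using i j by (cases i j rule: linorder_cases) auto
qed

lemma Pcirc_has_pos_coord: "x \<in> Pcirc d \<Longrightarrow> \<exists>i<d. x ! i > 0"
  unfolding Pcirc_def first_nonzero_pos_def by auto

lemma norm1_ge_1: "x \<in> Pcirc d \<Longrightarrow> norm1 d x \<ge> 1"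
  using Pcirc_has_pos_coord[of x d] abs_nth_le_norm1[of _ d x] by force

lemma card_le_mult_kappa:
  assumes "finite X" "X \<subseteq> Pcirc d" "kappa d X \<le> k"
  shows "int (card X) \<le> int d * k"
proof -
  have "int (card X) = (\<Sum>x\<in>X. 1)" by simp
  also have "\<dots> \<le> (\<Sum>x\<in>X. norm1 d x)"
    using assms(2) norm1_ge_1 by (intro sum_mono) auto
  also have "\<dots> \<le> int d * k" using assms(3) by (rule sum_norm1_le)
  finally show ?thesis .
qed

lemma delta_z_greatest:
  assumes "d > 0" "k \<ge> 0"
  shows card_le_delta_z:
      "\<And>Y. finite Y \<Longrightarrow> Y \<subseteq> Pcirc d \<Longrightarrow> kappa d Y \<le> k \<Longrightarrow> card Y \<le> delta_z d k"
    and ex_extremal: "\<exists>Y. extremal d k Y"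
proof -
  let ?S = "{card X | X. finite X \<and> X \<subseteq> Pcirc d \<and> kappa d X \<le> k}"
  have "?S \<subseteq> {..nat (int d * k)}" using card_le_mult_kappa by fastforce
  then have fin: "finite ?S" by (rule finite_subset) simp
  have "kappa d {} \<le> k" using assms by (simp add: kappa_le_iff col_sum_def)
  then have "?S \<noteq> {}" by blast
  show "card Y \<le> delta_z d k" if "finite Y" "Y \<subseteq> Pcirc d" "kappa d Y \<le> k" for Y
    unfolding delta_z_def using that fin by (intro Max_ge) auto
  have "delta_z d k \<in> ?S" unfolding delta_z_def using fin \<open>?S \<noteq> {}\<close> by (rule Max_in)
  then show "\<exists>Y. extremal d k Y" unfolding extremal_def by auto
qed

lemma nonneg_nth: "nonneg x \<Longrightarrow> i < length x \<Longrightarrow> 0 \<le> x ! i"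
  by (simp add: nonneg_def)

lemma nonneg_map_abs [simp]: "nonneg (map abs x)"
  by (simp add: nonneg_def)

lemma map_abs_nonneg: "nonneg x \<Longrightarrow> map abs x = x"
  by (simp add: nonneg_def map_idI)

lemma nonneg_list_update: "nonneg x \<Longrightarrow> 0 \<le> a \<Longrightarrow> nonneg (x[i := a])"
  using set_update_subset_insert[of x i a] by (auto simp: nonneg_def)

lemma norm1_transfer:
  assumes "nonneg x" "length x = d" "i < d" "j < d" "i \<noteq> j" "0 \<le> a" "0 \<le> b"
    and "a + b = x ! i + x ! j"
  shows "norm1 d (x[i := a, j := b]) = norm1 d x"
  using assms nonneg_nth[of x i] nonneg_nth[of x j] by (simp add: norm1_list_update)

lemma first_nonzero_pos_if_nonneg: "nonneg x \<Longrightarrow> \<exists>i<length x. x ! i \<noteq> 0 \<Longrightarrow> first_nonzero_pos x"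
  using first_nonzero_pos_or_uminus[of x]
  unfolding first_nonzero_pos_def by (auto dest: nonneg_nth)

lemma Pcirc_if_nonneg_one_mem: "length x = d \<Longrightarrow> nonneg x \<Longrightarrow> 1 \<in> set x \<Longrightarrow> x \<in> Pcirc d"
  unfolding Pcirc_def using primitive_if_one_mem[of x] first_nonzero_pos_if_nonneg[of x]
  by (fastforce simp: in_set_conv_nth)

section \<open>Sign normalisation and transpositions of coordinates\<close>

definition orient :: "int list \<Rightarrow> int list" where
  "orient z = (if first_nonzero_pos z then z else map uminus z)"

lemma length_orient [simp]: "length (orient z) = length z"
  by (simp add: orient_def)

lemma map_abs_orient [simp]: "map abs (orient z) = map abs z"
  by (simp add: orient_def comp_def)

lemma orient_first_nonzero_pos: "first_nonzero_pos x \<Longrightarrow> orient x = x"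
  by (simp add: orient_def)

lemma orient_uminus_first_nonzero_pos: "first_nonzero_pos x \<Longrightarrow> orient (map uminus x) = x"
  by (simp add: orient_def not_first_nonzero_pos_uminus comp_def)

lemma map_abs_in_Pcirc: "x \<in> Pcirc d \<Longrightarrow> map abs x \<in> Pcirc d"
  using Pcirc_has_pos_coord[of x d] primitive_iff_map_abs[of x]
  by (auto simp: Pcirc_def intro!: first_nonzero_pos_if_nonneg)

lemma orient_in_Pcirc: "map abs z \<in> Pcirc d \<Longrightarrow> orient z \<in> Pcirc d"
proof -
  assume z: "map abs z \<in> Pcirc d"
  then obtain i where "i < d" "\<bar>z ! i\<bar> > 0" using Pcirc_has_pos_coord by (force simp: Pcirc_def)
  then have "first_nonzero_pos z \<or> first_nonzero_pos (map uminus z)"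
    using z by (intro first_nonzero_pos_or_uminus) (auto simp: Pcirc_def)
  moreover have "primitive z" "primitive (map uminus z)"
    using z primitive_iff_map_abs[of z] primitive_iff_map_abs[of "map uminus z"]
    by (auto simp: Pcirc_def comp_def)
  ultimately show ?thesis using z by (auto simp: orient_def Pcirc_def)
qed

lemma permute_list_in_Pcirc:
  assumes "x \<in> Pcirc d" "nonneg x" "\<sigma> permutes {..<d}"
  shows "permute_list \<sigma> x \<in> Pcirc d"
proof -
  have len: "length x = d" using assms(1) by (simp add: Pcirc_def)
  obtain i where i: "i < d" "x ! i > 0" using Pcirc_has_pos_coord assms(1) by blast
  have inv_i: "inv \<sigma> i < d"
    using permutes_in_image[OF permutes_inv[OF assms(3)]] i(1) by simp
  then have "permute_list \<sigma> x ! inv \<sigma> i = x ! i"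
    using assms(3) len by (simp add: permute_list_nth permutes_inverses)
  moreover have "set (permute_list \<sigma> x) = set x" using assms(3) len by simp
  ultimately show ?thesis using assms len i inv_i
    by (auto simp: Pcirc_def primitive_def nonneg_def intro!: first_nonzero_pos_if_nonneg)
qed

lemma nth_permute_list_transpose:
  "i < length x \<Longrightarrow> j < length x \<Longrightarrow> l < length x \<Longrightarrow>
    permute_list (transpose i j) x ! l = x ! transpose i j l"
  by (simp add: permute_list_nth permutes_swap_id)

lemma transpose_less: "i < d \<Longrightarrow> j < d \<Longrightarrow> transpose i j l < d \<longleftrightarrow> l < d"
  by (auto simp: transpose_def)

definition transpose_point :: "nat \<Rightarrow> nat \<Rightarrow> int list \<Rightarrow> int list" where
  "transpose_point i j x = orient (permute_list (transpose i j) x)"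

lemma length_transpose_point [simp]: "length (transpose_point i j x) = length x"
  by (simp add: transpose_point_def)

lemma map_abs_transpose_point:
  "i < length x \<Longrightarrow> j < length x \<Longrightarrow>
    map abs (transpose_point i j x) = permute_list (transpose i j) (map abs x)"
  by (simp add: transpose_point_def permute_list_map permutes_swap_id)

lemma abs_transpose_point_nth:
  assumes "x \<in> Pcirc d" "i < d" "j < d" "l < d"
  shows "\<bar>transpose_point i j x ! l\<bar> = \<bar>x ! transpose i j l\<bar>"
proof -
  have len: "length x = d" using assms(1) by (simp add: Pcirc_def)
  then have "\<bar>transpose_point i j x ! l\<bar> = map abs (transpose_point i j x) ! l"
    using assms(4) by simp
  also have "\<dots> = \<bar>x ! transpose i j l\<bar>"
    using assms len by (simp add: map_abs_transpose_point nth_permute_list_transpose transpose_less)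
  finally show ?thesis .
qed

lemma transpose_point_in_Pcirc:
  assumes "x \<in> Pcirc d" "i < d" "j < d"
  shows "transpose_point i j x \<in> Pcirc d"
proof -
  have "length x = d" using assms(1) by (simp add: Pcirc_def)
  then have "map abs (permute_list (transpose i j) x) = permute_list (transpose i j) (map abs x)"
    using assms by (simp add: permute_list_map permutes_swap_id)
  also have "\<dots> \<in> Pcirc d"
    using assms by (intro permute_list_in_Pcirc map_abs_in_Pcirc) (simp_all add: permutes_swap_id)
  finally show ?thesis unfolding transpose_point_def by (rule orient_in_Pcirc)
qed

lemma permute_list_transpose_involutory:
  "i < length x \<Longrightarrow> j < length x \<Longrightarrow>
    permute_list (transpose i j) (permute_list (transpose i j) x) = x"
  by (simp flip: permute_list_compose add: permutes_swap_id)

lemma transpose_point_involutory: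
  assumes "x \<in> Pcirc d" "i < d" "j < d"
  shows "transpose_point i j (transpose_point i j x) = x"
proof -
  have x: "length x = d" "first_nonzero_pos x" using assms(1) by (auto simp: Pcirc_def)
  let ?z = "permute_list (transpose i j) x"
  have "permute_list (transpose i j) (orient ?z) = x \<or>
        permute_list (transpose i j) (orient ?z) = map uminus x"
    using assms x by (auto simp: orient_def permute_list_map permutes_swap_id
      permute_list_transpose_involutory)
  then show ?thesis
    using x by (auto simp: transpose_point_def
      orient_first_nonzero_pos orient_uminus_first_nonzero_pos)
qed

lemma norm1_transpose_point:
  assumes "x \<in> Pcirc d" "i < d" "j < d"
  shows "norm1 d (transpose_point i j x) = norm1 d x"
proof -
  have "norm1 d (transpose_point i j x) = (\<Sum>l<d. \<bar>x ! transpose i j l\<bar>)"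
    unfolding norm1_def using assms by (intro sum.cong) (simp_all add: abs_transpose_point_nth)
  also have "\<dots> = norm1 d x"
    unfolding norm1_def using assms
    by (subst sum.permute[OF permutes_swap_id]) (simp_all add: comp_def)
  finally show ?thesis .
qed

lemma inj_on_transpose_point:
  "X \<subseteq> Pcirc d \<Longrightarrow> i < d \<Longrightarrow> j < d \<Longrightarrow> inj_on (transpose_point i j) X"
  by (intro inj_on_inverseI[where g = "transpose_point i j"])
    (auto simp: transpose_point_involutory)

lemma col_sum_transpose_point_image:
  assumes "X \<subseteq> Pcirc d" "i < d" "j < d" "l < d"
  shows "col_sum (transpose_point i j ` X) l = col_sum X (transpose i j l)"
proof -
  have "inj_on (transpose_point i j) X" using assms by (intro inj_on_transpose_point)
  then have "col_sum (transpose_point i j ` X) l = (\<Sum>x\<in>X. \<bar>transpose_point i j x ! l\<bar>)"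
    by (simp add: col_sum_def sum.reindex)
  also have "\<dots> = col_sum X (transpose i j l)"
    unfolding col_sum_def using assms by (intro sum.cong) (auto simp: abs_transpose_point_nth)
  finally show ?thesis .
qed

lemma transpose_point_image_eq_if_closed:
  assumes "X \<subseteq> Pcirc d" "i < d" "j < d" "\<And>x. x \<in> X \<Longrightarrow> transpose_point i j x \<in> X"
  shows "transpose_point i j ` X = X"
proof
  show "X \<subseteq> transpose_point i j ` X"
    using assms by (force intro: rev_image_eqI simp: transpose_point_involutory)
qed (use assms in blast)

text \<open>
  For nonnegative \<open>u\<close>, the absolute values of \<open>partner i j u\<close> are those of \<open>u\<close> with the
  coordinates \<open>i\<close> and \<open>j\<close> swapped, and \<open>partner i j u \<noteq> u\<close> unless \<open>u ! i = u ! j = 0\<close>. So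
  the pair \<open>{u, partner i j u}\<close> has column sums \<open>u ! l + u ! transpose i j l\<close>, which depend
  on \<open>u ! i\<close> and \<open>u ! j\<close> only through \<open>u ! i + u ! j\<close>. When \<open>u ! i = u ! j\<close> the swap would
  give \<open>u\<close> back, so a sign is flipped instead.
\<close>
definition partner :: "nat \<Rightarrow> nat \<Rightarrow> int list \<Rightarrow> int list" where
  "partner i j u =
    orient (if u ! i = u ! j then u[j := - u ! j] else permute_list (transpose i j) u)"

lemma permute_list_transpose_eq_self:
  assumes "i < length u" "j < length u" "u ! i = u ! j"
  shows "permute_list (transpose i j) u = u"
  using assms by (intro nth_equalityI) (auto simp: nth_permute_list_transpose transpose_def)

lemma length_partner [simp]: "length (partner i j u) = length u"
  by (simp add: partner_def)

lemma map_abs_partner: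
  assumes "nonneg u" "i < length u" "j < length u"
  shows "map abs (partner i j u) = permute_list (transpose i j) u"
proof (cases "u ! i = u ! j")
  case True
  have "map abs (u[j := - u ! j]) = map abs u"
    using assms by (intro nth_equalityI) (auto simp: nth_list_update)
  then show ?thesis
    using True assms by (simp add: partner_def map_abs_nonneg permute_list_transpose_eq_self)
next
  case False
  have "map abs (permute_list (transpose i j) u) = permute_list (transpose i j) (map abs u)"
    using assms by (simp add: permute_list_map permutes_swap_id)
  then show ?thesis
    using False assms by (simp add: partner_def map_abs_nonneg)
qed

lemma abs_partner_nth:
  assumes "nonneg u" "length u = d" "i < d" "j < d" "l < d"
  shows "\<bar>partner i j u ! l\<bar> = u ! transpose i j l"
proof -
  have "\<bar>partner i j u ! l\<bar> = map abs (partner i j u) ! l"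
    using assms by simp
  then show ?thesis using assms by (simp add: map_abs_partner nth_permute_list_transpose)
qed

lemma partner_in_Pcirc:
  assumes "nonneg u" "u \<in> Pcirc d" "i < d" "j < d"
  shows "partner i j u \<in> Pcirc d"
proof -
  have "length u = d" using assms(2) by (simp add: Pcirc_def)
  then have "map abs (partner i j u) = permute_list (transpose i j) u"
    using assms by (simp add: map_abs_partner)
  also have "\<dots> \<in> Pcirc d" using assms by (simp add: permute_list_in_Pcirc permutes_swap_id)
  finally show ?thesis by (simp add: partner_def orient_in_Pcirc)
qed

lemma partner_neq:
  assumes "nonneg u" "length u = d" "i < d" "j < d" "i \<noteq> j" "u ! i \<noteq> 0 \<or> u ! j \<noteq> 0"
  shows "partner i j u \<noteq> u"
proof (cases "u ! i = u ! j")
  case True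
  then have pos: "u ! i > 0" "u ! j > 0" using assms nonneg_nth[of u] by force+
  have "u[j := - u ! j] \<noteq> u" "map uminus (u[j := - u ! j]) \<noteq> u"
    using pos assms by (metis neg_0_less_iff_less nth_list_update_eq nth_list_update_neq
        nth_map length_list_update order_less_asym)+
  then show ?thesis using True by (simp add: partner_def orient_def)
next
  case False
  then have "\<bar>partner i j u ! i\<bar> \<noteq> \<bar>u ! i\<bar>"
    using assms abs_partner_nth[of u d i j i] nonneg_nth[of u] by simp
  then show ?thesis by auto
qed

lemma col_sum_partner_pair:
  assumes "nonneg u" "length u = d" "i < d" "j < d" "i \<noteq> j" "u ! i \<noteq> 0 \<or> u ! j \<noteq> 0" "l < d"
  shows "col_sum {u, partner i j u} l = u ! l + u ! transpose i j l"
  using assms partner_neq[of u d i j] abs_partner_nth[of u d i j l] nonneg_nth[of u l]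
  by (simp add: col_sum_def)

definition spike :: "nat \<Rightarrow> int \<Rightarrow> int list" where
  "spike d m = 1 # (m - 1) # replicate (d - 2) 0"

lemma length_spike: "2 \<le> d \<Longrightarrow> length (spike d m) = d"
  by (simp add: spike_def)

lemma spike_in_Pcirc: "2 \<le> d \<Longrightarrow> 1 \<le> m \<Longrightarrow> spike d m \<in> Pcirc d"
  by (rule Pcirc_if_nonneg_one_mem) (auto simp: spike_def length_spike nonneg_def)

lemma norm1_spike: "2 \<le> d \<Longrightarrow> 1 \<le> m \<Longrightarrow> norm1 d (spike d m) = m"
  by (simp add: norm1_eq_sum_list length_spike) (simp add: spike_def sum_list_replicate)

lemma abs_spike_succ_nth_le: "1 \<le> m \<Longrightarrow> \<bar>spike d (m + 1) ! l\<bar> \<le> \<bar>spike d m ! l\<bar> + 1"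
  by (auto simp: spike_def nth_Cons')

section \<open>Structure of a unique extremal set\<close>

locale unique_extremal =
  fixes d :: nat and k :: int and X :: "int list set"
  assumes d_ge_2: "d \<ge> 2" and k_pos: "k > 0"
    and extremal_X: "extremal d k X"
    and unique: "\<And>Y. extremal d k Y \<Longrightarrow> Y = X"
begin

lemma finite_X: "finite X" and X_subset: "X \<subseteq> Pcirc d"
  and card_X: "card X = delta_z d k" and kappa_X: "kappa d X \<le> k"
  using extremal_X by (auto simp: extremal_def)

lemma col_sum_X_le: "l < d \<Longrightarrow> col_sum X l \<le> k"
  using col_sum_le_kappa kappa_X order_trans by blast

lemma exchange_impossible:
  assumes "A \<subseteq> X" "finite B" "B \<subseteq> Pcirc d" "B \<inter> X = {}" "B \<noteq> {}" "card A \<le> card B"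
    and "\<And>l. l < d \<Longrightarrow> col_sum X l - col_sum A l + col_sum B l \<le> k"
  shows False
proof -
  define Y where "Y = X - A \<union> B"
  have Y: "finite Y" "Y \<subseteq> Pcirc d" using assms finite_X X_subset by (auto simp: Y_def)
  have kappa_Y: "kappa d Y \<le> k"
    using assms finite_X d_ge_2 by (simp add: kappa_le_iff Y_def col_sum_exchange)
  have "(X - A) \<inter> B = {}" using assms by blast
  then have "card Y = card X - card A + card B"
    using assms finite_X finite_subset[OF assms(1)]
    by (simp add: Y_def card_Un_disjoint card_Diff_subset)
  then have "card X \<le> card Y"
    using assms card_mono[OF finite_X assms(1)] by linarith
  moreover have "card Y \<le> card X"
    using card_le_delta_z[of d k Y] Y kappa_Y card_X d_ge_2 k_pos by simp
  ultimately have "extremal d k Y" using Y kappa_Y card_X by (simp add: extremal_def)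
  then have "Y = X" by (rule unique)
  then show False using assms by (auto simp: Y_def)
qed

lemma transpose_point_image_eq: "i < d \<Longrightarrow> j < d \<Longrightarrow> transpose_point i j ` X = X"
proof (rule unique)
  assume ij: "i < d" "j < d"
  have "card (transpose_point i j ` X) = card X"
    using X_subset ij by (intro card_image inj_on_transpose_point)
  moreover have "kappa d (transpose_point i j ` X) \<le> k"
    using ij kappa_X d_ge_2 X_subset
    by (simp add: kappa_le_iff col_sum_transpose_point_image transpose_less)
  ultimately show "extremal d k (transpose_point i j ` X)"
    using finite_X X_subset card_X ij transpose_point_in_Pcirc by (auto simp: extremal_def)
qed

lemma mem_if_abs_le_transposed:
  assumes "x \<in> X" "y \<in> Pcirc d" "i < d" "j < d"
    and "\<And>l. l < d \<Longrightarrow> \<bar>y ! l\<bar> \<le> \<bar>x ! transpose i j l\<bar>"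
  shows "y \<in> X"
proof (rule ccontr)
  assume "y \<notin> X"
  let ?x = "transpose_point i j x"
  have "x \<in> Pcirc d" using assms X_subset by blast
  have "?x \<in> X" using transpose_point_image_eq assms by blast
  moreover have "col_sum X l - col_sum {?x} l + col_sum {y} l \<le> k" if "l < d" for l
  proof -
    have "col_sum {?x} l = \<bar>x ! transpose i j l\<bar>"
      using \<open>x \<in> Pcirc d\<close> assms that by (simp add: col_sum_def abs_transpose_point_nth)
    then show ?thesis
      using assms(5)[OF that] col_sum_X_le[OF that] by (simp add: col_sum_def)
  qed
  ultimately show False using assms \<open>y \<notin> X\<close> by (intro exchange_impossible[of "{?x}" "{y}"]) auto
qed

lemma mem_if_abs_le:
  "x \<in> X \<Longrightarrow> y \<in> Pcirc d \<Longrightarrow> (\<And>l. l < d \<Longrightarrow> \<bar>y ! l\<bar> \<le> \<bar>x ! l\<bar>) \<Longrightarrow> y \<in> X"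
  using mem_if_abs_le_transposed[of x y 0 0] d_ge_2 by simp

lemma partner_mem_iff:
  assumes "nonneg u" "u \<in> Pcirc d" "i < d" "j < d"
  shows "partner i j u \<in> X \<longleftrightarrow> u \<in> X"
proof -
  have len: "length u = d" using assms(2) by (simp add: Pcirc_def)
  have "\<bar>partner i j u ! l\<bar> = \<bar>u ! transpose i j l\<bar>" if "l < d" for l
    using assms len that abs_partner_nth[of u d i j l] by simp
  moreover have "\<bar>u ! l\<bar> = \<bar>partner i j u ! transpose i j l\<bar>" if "l < d" for l
    using assms len that abs_partner_nth[of u d i j "transpose i j l"] nonneg_nth[of u l]
    by (simp add: transpose_less)
  ultimately show ?thesis
    using assms partner_in_Pcirc
    by (metis mem_if_abs_le_transposed order_refl)
qed

lemma transfer_mem: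
  assumes "nonneg x" "x \<in> X" "i < d" "j < d" "i \<noteq> j" "0 \<le> a" "0 \<le> b"
    and "a + b = x ! i + x ! j" and "x[i := a, j := b] \<in> Pcirc d"
  shows "x[i := a, j := b] \<in> X"
proof (rule ccontr)
  let ?y = "x[i := a, j := b]"
  assume "?y \<notin> X"
  have len: "length x = d" using assms X_subset by (auto simp: Pcirc_def)
  have y: "nonneg ?y" "length ?y = d" "?y ! i = a" "?y ! j = b"
    using assms len by (simp_all add: nonneg_list_update)
  have x_nonzero: "x ! i \<noteq> 0 \<or> x ! j \<noteq> 0"
  proof (rule ccontr)
    assume "\<not> (x ! i \<noteq> 0 \<or> x ! j \<noteq> 0)"
    then have "a = x ! i" "b = x ! j" using assms by linarith+
    then have "?y = x" by simp
    then show False using \<open>?y \<notin> X\<close> assms by simp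
  qed
  then have y_nonzero: "?y ! i \<noteq> 0 \<or> ?y ! j \<noteq> 0"
    using assms y len nonneg_nth[of x i] nonneg_nth[of x j] by auto
  let ?A = "{x, partner i j x}" and ?B = "{?y, partner i j ?y}"
  have x_Pcirc: "x \<in> Pcirc d" using assms X_subset by blast
  have "card ?A = card ?B"
    using partner_neq[of x d i j] partner_neq[of ?y d i j] assms len y x_nonzero y_nonzero by simp
  moreover have "?A \<subseteq> X" using assms x_Pcirc partner_mem_iff by blast
  moreover have "?B \<subseteq> Pcirc d" "?B \<inter> X = {}"
    using assms y partner_in_Pcirc partner_mem_iff \<open>?y \<notin> X\<close> by auto
  moreover have "col_sum ?A l = col_sum ?B l" if "l < d" for l
  proof -
    have "x ! l + x ! transpose i j l = ?y ! l + ?y ! transpose i j l"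
      using assms len that by (auto simp: transpose_def nth_list_update)
    then show ?thesis
      using assms len y x_nonzero y_nonzero that by (simp add: col_sum_partner_pair)
  qed
  ultimately show False
    using col_sum_X_le by (intro exchange_impossible[of ?A ?B]) auto
qed

lemma first_one_form:
  assumes "nonneg x" "x \<in> Pcirc d"
  obtains u where "nonneg u" "length u = d" "u ! 0 = 1" "norm1 d u = norm1 d x"
    and "u \<in> X \<longleftrightarrow> x \<in> X"
proof -
  have len: "length x = d" using assms(2) by (simp add: Pcirc_def)
  obtain j where j: "0 < j" "j < d" "1 \<le> x ! 0 + x ! j"
  proof (cases "x ! 0 \<ge> 1")
    case True
    then show ?thesis using that[of 1] d_ge_2 nonneg_nth[OF assms(1), of 1] len by auto
  next
    case False
    then have "x ! 0 = 0" using nonneg_nth[OF assms(1), of 0] d_ge_2 len by auto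
    moreover obtain a where "a < d" "x ! a > 0" using Pcirc_has_pos_coord assms(2) by blast
    ultimately show ?thesis using that[of a] by (cases "a = 0") auto
  qed
  define u where "u = x[0 := 1, j := x ! 0 + x ! j - 1]"
  have u: "nonneg u" "length u = d" "u ! 0 = 1" "u ! j = x ! 0 + x ! j - 1"
    using assms(1) j len by (simp_all add: u_def nonneg_list_update)
  then have "u \<in> Pcirc d" using j nth_mem[of 0 u] by (intro Pcirc_if_nonneg_one_mem) auto
  have x_eq: "x = u[0 := x ! 0, j := x ! j]"
    using j by (simp add: u_def list_update_swap)
  have "norm1 d u = norm1 d x"
    unfolding u_def using assms(1) len j by (intro norm1_transfer) auto
  moreover have "u \<in> X" if "x \<in> X"
    unfolding u_def using assms j len that \<open>u \<in> Pcirc d\<close>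
    by (intro transfer_mem) (auto simp: u_def nonneg_nth)
  moreover have "x \<in> X" if "u \<in> X"
    using u j assms that x_eq transfer_mem[of u 0 j "x ! 0" "x ! j"] nonneg_nth[OF assms(1)] len
    by auto
  ultimately show ?thesis using that u by blast
qed

text \<open>
  Moving one unit from a coordinate where \<open>u\<close> exceeds \<open>v\<close> to one where it falls short keeps
  the point in \<open>X\<close> and brings it closer to \<open>v\<close>; the coordinate \<open>0\<close>, equal to \<open>1\<close> in both
  points, keeps the new point primitive.
\<close>
lemma transfer_step:
  assumes v: "nonneg v" "length v = d" "v ! 0 = 1"
    and u: "nonneg u" "u ! 0 = 1" "u \<in> X" "norm1 d v \<le> norm1 d u"
    and a: "a < d" "u ! a < v ! a"
  obtains w where "nonneg w" "w ! 0 = 1" "w \<in> X" "norm1 d w = norm1 d u"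
    and "(\<Sum>l<d. \<bar>v ! l - w ! l\<bar>) < (\<Sum>l<d. \<bar>v ! l - u ! l\<bar>)"
proof -
  have len: "length u = d" using u(3) X_subset by (auto simp: Pcirc_def)
  have "\<exists>b<d. v ! b < u ! b"
  proof (rule ccontr)
    assume no_b: "\<not> (\<exists>b<d. v ! b < u ! b)"
    have "\<bar>u ! l\<bar> \<le> \<bar>v ! l\<bar>" if "l < d" for l
      using that no_b nonneg_nth[OF u(1), of l] len by force
    then have "norm1 d u < norm1 d v"
      unfolding norm1_def using a nonneg_nth[OF u(1), of a] len
      by (intro sum_strict_mono_ex1) (auto intro!: bexI[of _ a])
    then show False using u(4) by simp
  qed
  then obtain b where b: "b < d" "v ! b < u ! b" by blast
  have "a \<noteq> 0" "b \<noteq> 0" "a \<noteq> b"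
    using a(2) b(2) v(3) u(2) by (metis less_irrefl less_asym)+
  have ua: "0 \<le> u ! a" and vb: "0 \<le> v ! b"
    using nonneg_nth[OF u(1)] nonneg_nth[OF v(1)] a b v(2) len by simp_all
  define w where "w = u[a := u ! a + 1, b := u ! b - 1]"
  have w: "nonneg w" "length w = d" "w ! 0 = 1"
    using u(1,2) len ua vb b(2) \<open>a \<noteq> 0\<close> \<open>b \<noteq> 0\<close>
    by (simp_all add: w_def nonneg_list_update)
  then have "w \<in> Pcirc d" using d_ge_2 nth_mem[of 0 w] by (intro Pcirc_if_nonneg_one_mem) auto
  then have "w \<in> X"
    unfolding w_def using u(1,3) a b \<open>a \<noteq> b\<close> ua vb
    by (intro transfer_mem) (auto simp: w_def)
  moreover have "norm1 d w = norm1 d u"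
    unfolding w_def using u(1) a b \<open>a \<noteq> b\<close> len ua vb by (intro norm1_transfer) auto
  moreover have "(\<Sum>l<d. \<bar>v ! l - w ! l\<bar>) < (\<Sum>l<d. \<bar>v ! l - u ! l\<bar>)"
  proof -
    have "w ! l = u ! l + (if l = a then 1 else 0) - (if l = b then 1 else 0)" if "l < d" for l
      using that len \<open>a \<noteq> b\<close> by (auto simp: w_def nth_list_update)
    then show ?thesis using a b by (intro sum_strict_mono_ex1) (auto intro!: bexI[of _ a])
  qed
  ultimately show ?thesis using that w by blast
qed

lemma mem_if_first_one_norm1_le:
  assumes v: "nonneg v" "length v = d" "v ! 0 = 1"
    and "nonneg u" "u ! 0 = 1" "u \<in> X" "norm1 d v \<le> norm1 d u"
  shows "v \<in> X"
  using assms(4-)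
proof (induction "nat (\<Sum>l<d. \<bar>v ! l - u ! l\<bar>)" arbitrary: u rule: less_induct)
  case less
  show ?case
  proof (cases "\<forall>l<d. v ! l \<le> u ! l")
    case True
    then have "\<bar>v ! l\<bar> \<le> \<bar>u ! l\<bar>" if "l < d" for l
      using that v nonneg_nth[OF v(1), of l] by auto
    moreover have "v \<in> Pcirc d"
      using v d_ge_2 nth_mem[of 0 v] by (intro Pcirc_if_nonneg_one_mem) auto
    ultimately show ?thesis by (intro mem_if_abs_le[OF less.prems(3)])
  next
    case False
    then obtain a where "a < d" "u ! a < v ! a" by auto
    with v less.prems obtain w where w: "nonneg w" "w ! 0 = 1" "w \<in> X" "norm1 d w = norm1 d u"
      and closer: "(\<Sum>l<d. \<bar>v ! l - w ! l\<bar>) < (\<Sum>l<d. \<bar>v ! l - u ! l\<bar>)"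
      by (rule transfer_step)
    have "0 \<le> (\<Sum>l<d. \<bar>v ! l - w ! l\<bar>)" by (rule sum_nonneg) simp
    with closer have "nat (\<Sum>l<d. \<bar>v ! l - w ! l\<bar>) < nat (\<Sum>l<d. \<bar>v ! l - u ! l\<bar>)"
      using nat_less_eq_zless by blast
    then show ?thesis using w less.prems(4) by (intro less.hyps[of w]) auto
  qed
qed

lemma mem_if_norm1_le:
  assumes "x \<in> X" "y \<in> Pcirc d" "norm1 d y \<le> norm1 d x"
  shows "y \<in> X"
proof -
  have x: "x \<in> Pcirc d" "length x = d" and len_y: "length y = d"
    using assms X_subset by (auto simp: Pcirc_def)
  have "map abs x \<in> X" using x by (intro mem_if_abs_le[OF assms(1)] map_abs_in_Pcirc) auto
  obtain ux where ux: "nonneg ux" "ux ! 0 = 1" "norm1 d ux = norm1 d (map abs x)"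
    and ux_iff: "ux \<in> X \<longleftrightarrow> map abs x \<in> X"
    using first_one_form[OF nonneg_map_abs map_abs_in_Pcirc[OF x(1)]] by blast
  obtain uy where uy: "nonneg uy" "length uy = d" "uy ! 0 = 1" "norm1 d uy = norm1 d (map abs y)"
    and uy_iff: "uy \<in> X \<longleftrightarrow> map abs y \<in> X"
    using first_one_form[OF nonneg_map_abs map_abs_in_Pcirc[OF assms(2)]] by blast
  have "norm1 d uy \<le> norm1 d ux" using ux(3) uy(4) assms(3) x(2) len_y by (simp add: norm1_map_abs)
  then have "uy \<in> X" using uy ux ux_iff \<open>map abs x \<in> X\<close>
    by (intro mem_if_first_one_norm1_le[of uy ux]) auto
  then have "map abs y \<in> X" using uy_iff by blast
  then show ?thesis using len_y by (intro mem_if_abs_le[OF _ assms(2)]) auto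
qed

lemma X_nonempty: "X \<noteq> {}"
proof -
  have "kappa d {spike d 1} \<le> k"
    using d_ge_2 k_pos abs_nth_le_norm1[of _ d "spike d 1"]
    by (force simp: kappa_le_iff col_sum_def norm1_spike)
  then have "card {spike d 1} \<le> card X"
    using d_ge_2 k_pos spike_in_Pcirc[of d 1] card_X card_le_delta_z[of d k "{spike d 1}"] by simp
  then show ?thesis using finite_X by auto
qed

lemma X_eq_Bint: obtains p where "p \<ge> 1" "X = Bint d p \<inter> Pcirc d"
proof -
  obtain x where x: "x \<in> X" "norm1 d x = Max (norm1 d ` X)"
    using Max_in[of "norm1 d ` X"] finite_X X_nonempty
    by (metis empty_is_image finite_imageI imageE)
  have "X = Bint d (norm1 d x) \<inter> Pcirc d"
    using x finite_X X_subset mem_if_norm1_le[OF x(1)]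
    by (auto simp: Bint_iff Pcirc_def)
  moreover have "norm1 d x \<ge> 1" using x X_subset norm1_ge_1 by blast
  ultimately show ?thesis using that by blast
qed

lemma kappa_X_eq: "kappa d X = k"
proof (rule ccontr)
  assume "kappa d X \<noteq> k"
  then have kappa_lt: "kappa d X < k" using kappa_X by simp
  obtain p where p: "p \<ge> 1" "X = Bint d p \<inter> Pcirc d" using X_eq_Bint .
  have "spike d p \<in> X" "spike d (p + 1) \<notin> X" "spike d (p + 1) \<in> Pcirc d"
    using p d_ge_2 by (simp_all add: spike_in_Pcirc Bint_iff norm1_spike length_spike)
  moreover have "col_sum X l - col_sum {spike d p} l + col_sum {spike d (p + 1)} l \<le> k"
    if "l < d" for l
    using col_sum_le_kappa[OF that, of X] kappa_lt abs_spike_succ_nth_le[OF p(1), of d l]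
    by (simp add: col_sum_def)
  ultimately show False by (intro exchange_impossible[of "{spike d p}" "{spike d (p + 1)}"]) auto
qed

lemma ex_Bint_kappa_eq: "\<exists>p>0. k = kappa d (Bint d p \<inter> Pcirc d)"
  using X_eq_Bint kappa_X_eq by (metis zero_less_one order_less_le_trans)

end

section \<open>Balls are unique extremal sets\<close>

lemma eq_if_sum_le_sublevel:
  fixes f :: "'a \<Rightarrow> 'b::linordered_idom"
  assumes "finite Y" "finite W" "card W \<le> card Y" "sum f Y \<le> sum f W" "0 \<le> p"
    and "\<And>y. y \<in> Y - W \<Longrightarrow> p < f y" "\<And>w. w \<in> W \<Longrightarrow> f w \<le> p"
  shows "Y = W"
proof -
  have card_le: "card (W - Y) \<le> card (Y - W)"
    using assms(1-3) card_Diff_subset_Int[of Y W] card_Diff_subset_Int[of W Y]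
    by (simp add: Int_commute card_mono)
  have "sum f (Y \<inter> W) + sum f (Y - W) \<le> sum f (Y \<inter> W) + sum f (W - Y)"
    using assms(1,2,4) by (simp add: sum.Int_Diff[of Y f W] sum.Int_Diff[of W f Y] Int_commute)
  then have sum_le: "sum f (Y - W) \<le> sum f (W - Y)" by simp
  have "Y - W = {}"
  proof (rule ccontr)
    assume "Y - W \<noteq> {}"
    then have "of_nat (card (Y - W)) * p < sum f (Y - W)"
      using assms(1,6) sum_strict_mono[of "Y - W" "\<lambda>_. p" f] by simp
    also have "\<dots> \<le> of_nat (card (W - Y)) * p"
      using sum_le sum_mono[of "W - Y" f "\<lambda>_. p"] assms(7) by simp
    also have "\<dots> \<le> of_nat (card (Y - W)) * p"
      using card_le assms(5) by (simp add: mult_right_mono)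
    finally show False by simp
  qed
  moreover have "W - Y = {}" using card_le calculation assms(2) by simp
  ultimately show ?thesis by blast
qed

lemma transpose_point_in_Bint:
  assumes "x \<in> Bint d p \<inter> Pcirc d" "i < d" "j < d"
  shows "transpose_point i j x \<in> Bint d p \<inter> Pcirc d"
  using assms transpose_point_in_Pcirc[of x d i j] norm1_transpose_point[of x d i j]
  by (simp add: Bint_iff Pcirc_def)

lemma col_sum_Bint_eq:
  assumes "i < d" "j < d"
  shows "col_sum (Bint d p \<inter> Pcirc d) i = col_sum (Bint d p \<inter> Pcirc d) j"
proof -
  let ?W = "Bint d p \<inter> Pcirc d"
  have "transpose_point i j ` ?W = ?W"
    using assms transpose_point_in_Bint by (intro transpose_point_image_eq_if_closed) auto
  then have "col_sum ?W j = col_sum (transpose_point i j ` ?W) j" by simp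
  also have "\<dots> = col_sum ?W i" using assms col_sum_transpose_point_image[of ?W d i j j] by simp
  finally show ?thesis by simp
qed

lemma kappa_Bint:
  assumes "i < d"
  shows "kappa d (Bint d p \<inter> Pcirc d) = col_sum (Bint d p \<inter> Pcirc d) i"
proof (rule antisym)
  have "col_sum (Bint d p \<inter> Pcirc d) l \<le> col_sum (Bint d p \<inter> Pcirc d) i" if "l < d" for l
    using col_sum_Bint_eq[OF that assms] by simp
  then show "kappa d (Bint d p \<inter> Pcirc d) \<le> col_sum (Bint d p \<inter> Pcirc d) i"
    using assms by (simp add: kappa_le_iff)
qed (rule col_sum_le_kappa[OF assms])

lemma sum_norm1_Bint:
  "(\<Sum>x\<in>Bint d p \<inter> Pcirc d. norm1 d x) = int d * kappa d (Bint d p \<inter> Pcirc d)"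
proof -
  have "(\<Sum>i<d. col_sum (Bint d p \<inter> Pcirc d) i) = (\<Sum>i<d. kappa d (Bint d p \<inter> Pcirc d))"
    by (intro sum.cong) (simp_all add: kappa_Bint)
  then show ?thesis by (simp add: sum_norm1_eq_sum_col_sum)
qed

lemma eq_Bint_if_card_ge:
  assumes "p \<ge> 0" "finite Y" "Y \<subseteq> Pcirc d"
    and "kappa d Y \<le> kappa d (Bint d p \<inter> Pcirc d)" "card (Bint d p \<inter> Pcirc d) \<le> card Y"
  shows "Y = Bint d p \<inter> Pcirc d"
proof (rule eq_if_sum_le_sublevel[where f = "norm1 d" and p = p])
  show "sum (norm1 d) Y \<le> sum (norm1 d) (Bint d p \<inter> Pcirc d)"
    using sum_norm1_le[OF assms(4)] sum_norm1_Bint by simp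
  show "p < norm1 d y" if "y \<in> Y - Bint d p \<inter> Pcirc d" for y
    using that assms(3) by (auto simp: Bint_iff Pcirc_def)
  show "norm1 d w \<le> p" if "w \<in> Bint d p \<inter> Pcirc d" for w
    using that by (simp add: Bint_iff)
qed (simp_all add: assms finite_Bint)

lemma ex1_extremal_Bint:
  assumes "d > 0" "p \<ge> 0" "k = kappa d (Bint d p \<inter> Pcirc d)"
  shows "\<exists>!X. extremal d k X"
proof
  let ?W = "Bint d p \<inter> Pcirc d"
  have "0 \<le> col_sum ?W 0" unfolding col_sum_def by (rule sum_nonneg) simp
  then have "0 \<le> k" using assms col_sum_le_kappa[of 0 d ?W] by linarith
  then obtain Y where Y: "extremal d k Y" using ex_extremal assms(1) by blast
  have "card ?W \<le> delta_z d k"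
    using assms \<open>0 \<le> k\<close> finite_Bint by (intro card_le_delta_z) auto
  then have eq: "X = ?W" if "extremal d k X" for X
    using that Y assms(2,3) by (intro eq_Bint_if_card_ge) (auto simp: extremal_def)
  show "extremal d k ?W" using Y eq[OF Y] by simp
  show "X = ?W" if "extremal d k X" for X using eq[OF that] .
qed

theorem theorem1p4:
  fixes d :: nat and k :: int
  assumes "d \<ge> 2" and "k > 0"
  shows "(\<exists>!X. finite X \<and> X \<subseteq> Pcirc d \<and> card X = delta_z d k \<and> kappa d X \<le> k)
         \<longleftrightarrow> (\<exists>p::int. p > 0 \<and> k = kappa d (Bint d p \<inter> Pcirc d))"
proof -
  have "(\<exists>!X. extremal d k X) \<longleftrightarrow> (\<exists>p>0. k = kappa d (Bint d p \<inter> Pcirc d))"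
  proof
    assume "\<exists>!X. extremal d k X"
    then obtain X where "extremal d k X" "\<And>Y. extremal d k Y \<Longrightarrow> Y = X" by blast
    then interpret unique_extremal d k X using assms by unfold_locales
    show "\<exists>p>0. k = kappa d (Bint d p \<inter> Pcirc d)" by (rule ex_Bint_kappa_eq)
  next
    assume "\<exists>p>0. k = kappa d (Bint d p \<inter> Pcirc d)"
    then obtain p where "p > 0" "k = kappa d (Bint d p \<inter> Pcirc d)" by blast
    then show "\<exists>!X. extremal d k X" using assms(1) by (intro ex1_extremal_Bint) auto
  qed
  then show ?thesis unfolding extremal_def .
qed

end
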